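(* Let $k\ge1$, $\beta>0$, $J,J_p\in\mathbb{R}$, $a=e^{2\beta J}$, $b=e^{2\beta J_p}$. Let $\mathbf{u}=\{\mathbf{u}_{xy}\}$, with $\mathbf{u}_{xy}=(u_{xy,1},u_{xy,2},u_{xy,3})\in(0,\infty)^3$ for each $x\in V$ and $y\in S(x)$, satisfy for every such edge $$u_{xy,1}=a\prod_{z\in S(y)}\frac{b u_{yz,3}+1}{u_{yz,3}+b},\quad u_{xy,2}=a\prod_{z\in S(y)}\frac{(b u_{yz,2}+1)u_{yz,3}}{(u_{yz,3}+b)u_{yz,1}},\quad u_{xy,3}=a\prod_{z\in S(y)}\frac{(b u_{yz,3}+1)u_{yz,1}}{(u_{yz,2}+b)u_{yz,3}}.$$ Then two things hold. (i) There exist boundary fields $\mathbf{h}$ with $u_{xy,1}=a e^{h_{xy,++}+h_{xy,-+}}$, $u_{xy,2}=a e^{h_{xy,--}+h_{xy,-+}}$ and $u_{xy,3}=a e^{h_{xy,++}+h_{xy,+-}}$ for all edges, such that the measures $\mu^{(n)}_{\mathbf{h}}$ are compatible. (ii) All boundary fields $\mathbf{h}$ satisfying these relations give the same family $\{\mu^{(n)}_{\mathbf{h}}\}_{n\ge1}$. Consequently there is a unique Gibbs measure $\mu_{\mathbf{u}}$ associated with $\mathbf{u}$.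
   Context: $\Gamma^k_+=(V,\Lambda)$ is the semi-infinite Cayley tree of order $k$ with root $x^0$. We write $|x|=d(x,x^0)$, $W_n=\{|x|=n\}$, $V_n=\{|x|\le n\}$, and $S(x)$ for the set of direct successors of $x$. Nearest neighbours $\langle x,y\rangle$ satisfy $d(x,y)=1$. Prolonged next-nearest neighbours $\widetilde{>x,y<}$ satisfy $d(x,y)=2$ and $|x|\ne|y|$. The Hamiltonian is $$H_n(\sigma)=-J_p\sum_{\widetilde{>x,y<}\subset V_n}\sigma(x)\sigma(y)-J\sum_{\langle x,y\rangle\subset V_n}\sigma(x)\sigma(y)$$ for $\sigma\in\{-1,+1\}^{V_n}$. A boundary field $\mathbf{h}$ assigns reals $h_{xy,++},h_{xy,+-},h_{xy,-+},h_{xy,--}$ to each edge. The measures are $$\mu^{(n)}_{\mathbf{h}}(\sigma)=Z_n^{-1}\exp\Big[-\beta H_n(\sigma)+\sum_{x\in W_{n-1}}\sum_{y\in S(x)}\sigma(x)\sigma(y)h_{xy,\sigma(x)\sigma(y)}\Big],$$ with $Z_n$ the normalizing constant. They are compatible if $\sum_{\omega\in\{-1,+1\}^{W_n}}\mu^{(n)}_{\mathbf{h}}(\sigma\vee\omega)=\mu^{(n-1)}_{\mathbf{h}}(\sigma)$ for all $n\ge2$ and all $\sigma\in\{-1,+1\}^{V_{n-1}}$. A compatible family determines, by Kolmogorov's theorem, a unique probability measure on $\{-1,+1\}^V$ with these marginals, called a Gibbs measure. *)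

theory Defs
  imports Main "HOL-Library.FuncSet" Complex_Main
begin

(* Semi-infinite Cayley tree of order k: vertices are words over {0..<k},
   root = [], |x| = length x, direct successors S(x) = {x @ [i] | i < k}. *)

definition tree_V :: "nat \<Rightarrow> nat list set" where
  "tree_V k = {x. set x \<subseteq> {..<k}}"

definition succs :: "nat \<Rightarrow> nat list \<Rightarrow> nat list set" where
  "succs k x = {x @ [i] | i. i < k}"

definition ball_V :: "nat \<Rightarrow> nat \<Rightarrow> nat list set" where
  "ball_V k n = {x \<in> tree_V k. length x \<le> n}"

definition sphere_W :: "nat \<Rightarrow> nat \<Rightarrow> nat list set" where
  "sphere_W k n = {x \<in> tree_V k. length x = n}"

definition nn_pairs :: "nat \<Rightarrow> nat \<Rightarrow> (nat list \<times> nat list) set" where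
  "nn_pairs k n = {(x, y). x \<in> ball_V k n \<and> y \<in> ball_V k n \<and> y \<in> succs k x}"

(* prolonged next-nearest-neighbour pairs in V_n: d(x,z) = 2 and |x| \<noteq> |z|,
   i.e. z is a grandchild of x; each unordered pair listed once *)
definition pnnn_pairs :: "nat \<Rightarrow> nat \<Rightarrow> (nat list \<times> nat list) set" where
  "pnnn_pairs k n = {(x, z). x \<in> ball_V k n \<and> z \<in> ball_V k n \<and>
                        (\<exists>y \<in> succs k x. z \<in> succs k y)}"

definition configs_on :: "nat list set \<Rightarrow> (nat list \<Rightarrow> real) set" where
  "configs_on A = (A \<rightarrow>\<^sub>E {-1, 1})"

definition hamiltonian ::
  "nat \<Rightarrow> real \<Rightarrow> real \<Rightarrow> nat \<Rightarrow> (nat list \<Rightarrow> real) \<Rightarrow> real" where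
  "hamiltonian k J Jp n \<sigma> =
     - Jp * (\<Sum>(x, y) \<in> pnnn_pairs k n. \<sigma> x * \<sigma> y)
     - J * (\<Sum>(x, y) \<in> nn_pairs k n. \<sigma> x * \<sigma> y)"

(* boundary field: h x y s t = h_{xy, s t} for signs s = sigma(x), t = sigma(y)
   in {-1,1}; e.g. h x y (-1) 1 = h_{xy,-+}. *)
type_synonym bfield = "nat list \<Rightarrow> nat list \<Rightarrow> real \<Rightarrow> real \<Rightarrow> real"

definition boundary_term :: "nat \<Rightarrow> bfield \<Rightarrow> nat \<Rightarrow> (nat list \<Rightarrow> real) \<Rightarrow> real" where
  "boundary_term k h n \<sigma> =
     (\<Sum>x \<in> sphere_W k (n - 1). \<Sum>y \<in> succs k x. \<sigma> x * \<sigma> y * h x y (\<sigma> x) (\<sigma> y))"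

definition gibbs_weight ::
  "nat \<Rightarrow> real \<Rightarrow> real \<Rightarrow> real \<Rightarrow> bfield \<Rightarrow> nat \<Rightarrow> (nat list \<Rightarrow> real) \<Rightarrow> real" where
  "gibbs_weight k \<beta> J Jp h n \<sigma> =
     exp (- \<beta> * hamiltonian k J Jp n \<sigma> + boundary_term k h n \<sigma>)"

definition partition_fn :: "nat \<Rightarrow> real \<Rightarrow> real \<Rightarrow> real \<Rightarrow> bfield \<Rightarrow> nat \<Rightarrow> real" where
  "partition_fn k \<beta> J Jp h n =
     (\<Sum>\<sigma> \<in> configs_on (ball_V k n). gibbs_weight k \<beta> J Jp h n \<sigma>)"

definition mu_n ::
  "nat \<Rightarrow> real \<Rightarrow> real \<Rightarrow> real \<Rightarrow> bfield \<Rightarrow> nat \<Rightarrow> (nat list \<Rightarrow> real) \<Rightarrow> real" where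
  "mu_n k \<beta> J Jp h n \<sigma> = gibbs_weight k \<beta> J Jp h n \<sigma> / partition_fn k \<beta> J Jp h n"

definition join_conf :: "nat \<Rightarrow> nat \<Rightarrow> (nat list \<Rightarrow> real) \<Rightarrow> (nat list \<Rightarrow> real) \<Rightarrow> (nat list \<Rightarrow> real)" where
  "join_conf k n \<sigma> \<omega> = (\<lambda>x. if x \<in> ball_V k (n - 1) then \<sigma> x else \<omega> x)"

definition compatible :: "nat \<Rightarrow> real \<Rightarrow> real \<Rightarrow> real \<Rightarrow> bfield \<Rightarrow> bool" where
  "compatible k \<beta> J Jp h \<longleftrightarrow>
     (\<forall>n \<ge> 2. \<forall>\<sigma> \<in> configs_on (ball_V k (n - 1)).
        (\<Sum>\<omega> \<in> configs_on (sphere_W k n). mu_n k \<beta> J Jp h n (join_conf k n \<sigma> \<omega>))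
          = mu_n k \<beta> J Jp h (n - 1) \<sigma>)"

definition u_h_rel ::
  "nat \<Rightarrow> real \<Rightarrow> (nat list \<Rightarrow> nat list \<Rightarrow> real) \<Rightarrow> (nat list \<Rightarrow> nat list \<Rightarrow> real)
     \<Rightarrow> (nat list \<Rightarrow> nat list \<Rightarrow> real) \<Rightarrow> bfield \<Rightarrow> bool" where
  "u_h_rel k a u1 u2 u3 h \<longleftrightarrow>
     (\<forall>x \<in> tree_V k. \<forall>y \<in> succs k x.
        u1 x y = a * exp (h x y 1 1 + h x y (-1) 1) \<and>
        u2 x y = a * exp (h x y (-1) (-1) + h x y (-1) 1) \<and>
        u3 x y = a * exp (h x y 1 1 + h x y 1 (-1)))"

end

theory Submission
  imports Defs
begin

text \<open>Summing out the spins on the outermost sphere \<open>W\<^sub>n\<close> turns the weight on \<open>V\<^sub>n\<close> into the weight on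
  \<open>V\<^bsub>n-1\<^esub>\<close> times, for each \<open>x \<in> W\<^bsub>n-1\<^esub>\<close>, a product over the children of \<open>x\<close> of one-edge sums that depend
  only on the spins of \<open>x\<close> and of its parent. Compatibility therefore holds as soon as this product
  equals a constant times \<open>exp (\<sigma>(x') \<sigma>(x) h\<^bsub>x'x,\<sigma>(x')\<sigma>(x)\<^esub>)\<close>, \<open>x'\<close> the parent of \<open>x\<close>; for the field with
  \<open>h\<^bsub>xy,-+\<^esub> = 0\<close> determined by \<open>u\<close>, the ratios of these products for the four spin pairs are exactly
  the right-hand sides of the fixed-point equations. Uniqueness holds because the relations
  between \<open>u\<close> and \<open>h\<close> determine \<open>\<sigma>(x) \<sigma>(y) h\<^bsub>xy,\<sigma>(x)\<sigma>(y)\<^esub>\<close> up to an additive constant per edge, which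
  cancels under normalisation.\<close>

lemma succs_eq: "succs k x = (\<lambda>i. x @ [i]) ` {..<k}"
  by (auto simp: succs_def)

lemma finite_succs [simp]: "finite (succs k x)"
  by (simp add: succs_eq)

lemma finite_sphere_W [simp]: "finite (sphere_W k n)"
proof -
  have "sphere_W k n = {xs. set xs \<subseteq> {..<k} \<and> length xs = n}"
    by (auto simp: sphere_W_def tree_V_def)
  then show ?thesis using finite_lists_length_eq[of "{..<k}" n] by simp
qed

lemma finite_ball_V [simp]: "finite (ball_V k n)"
proof -
  have "ball_V k n = {xs. set xs \<subseteq> {..<k} \<and> length xs \<le> n}"
    by (auto simp: ball_V_def tree_V_def)
  then show ?thesis using finite_lists_length_le[of "{..<k}" n] by simp
qed

lemma finite_nn_pairs [simp]: "finite (nn_pairs k n)"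
  by (rule finite_subset[of _ "ball_V k n \<times> ball_V k n"]) (auto simp: nn_pairs_def)

lemma finite_pnnn_pairs [simp]: "finite (pnnn_pairs k n)"
  by (rule finite_subset[of _ "ball_V k n \<times> ball_V k n"]) (auto simp: pnnn_pairs_def)

lemma sphere_W_SucD:
  assumes "y \<in> sphere_W k (Suc m)"
  shows "butlast y \<in> sphere_W k m" and "y \<in> succs k (butlast y)"
proof -
  have ne: "y \<noteq> []" using assms by (auto simp: sphere_W_def)
  then have y: "y = butlast y @ [last y]" by simp
  have "set y \<subseteq> {..<k}" using assms by (auto simp: sphere_W_def tree_V_def)
  then have "last y < k" "set (butlast y) \<subseteq> {..<k}"
    using ne by (auto dest: in_set_butlastD) (meson last_in_set lessThan_iff subsetD)
  then show "butlast y \<in> sphere_W k m" "y \<in> succs k (butlast y)"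
    using assms y by (auto simp: sphere_W_def tree_V_def succs_def)
qed

lemma succs_in_sphere_W:
  assumes "x \<in> sphere_W k m" and "y \<in> succs k x"
  shows "y \<in> sphere_W k (Suc m)" and "butlast y = x"
  using assms by (auto simp: sphere_W_def tree_V_def succs_def)

lemma sphere_W_subset_tree_V: "sphere_W k m \<subseteq> tree_V k"
  by (auto simp: sphere_W_def)

lemma sphere_W_subset_ball_V: "sphere_W k m \<subseteq> ball_V k m"
  by (auto simp: sphere_W_def ball_V_def)

lemma sphere_W_Suc_disjoint_ball_V: "y \<in> sphere_W k (Suc m) \<Longrightarrow> y \<notin> ball_V k m"
  by (auto simp: sphere_W_def ball_V_def)

lemma ball_V_Suc: "ball_V k (Suc m) = ball_V k m \<union> sphere_W k (Suc m)"
  by (auto simp: ball_V_def sphere_W_def)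

lemma butlast_in_ball_V: "x \<in> ball_V k m \<Longrightarrow> butlast x \<in> ball_V k m"
  by (auto simp: ball_V_def tree_V_def dest: in_set_butlastD)

lemma butlast_sphere_W_Suc_in_ball_V: "y \<in> sphere_W k (Suc m) \<Longrightarrow> butlast y \<in> ball_V k m"
  using sphere_W_SucD(1) sphere_W_subset_ball_V by blast

lemma sum_sphere_W_succs:
  "(\<Sum>x\<in>sphere_W k m. \<Sum>y\<in>succs k x. f x y) = (\<Sum>y\<in>sphere_W k (Suc m). f (butlast y) y)"
proof -
  have "(\<Sum>x\<in>sphere_W k m. \<Sum>y\<in>succs k x. f x y) = (\<Sum>(x, y)\<in>Sigma (sphere_W k m) (succs k). f x y)"
    by (rule sum.Sigma) auto
  also have "\<dots> = (\<Sum>y\<in>sphere_W k (Suc m). f (butlast y) y)"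
    by (rule sum.reindex_bij_witness[where i="\<lambda>y. (butlast y, y)" and j=snd])
       (auto dest: sphere_W_SucD succs_in_sphere_W)
  finally show ?thesis .
qed

lemma prod_sphere_W_succs:
  "(\<Prod>x\<in>sphere_W k m. \<Prod>y\<in>succs k x. f x y) = (\<Prod>y\<in>sphere_W k (Suc m). f (butlast y) y)"
proof -
  have "(\<Prod>x\<in>sphere_W k m. \<Prod>y\<in>succs k x. f x y) = (\<Prod>(x, y)\<in>Sigma (sphere_W k m) (succs k). f x y)"
    by (rule prod.Sigma) auto
  also have "\<dots> = (\<Prod>y\<in>sphere_W k (Suc m). f (butlast y) y)"
    by (rule prod.reindex_bij_witness[where i="\<lambda>y. (butlast y, y)" and j=snd])
       (auto dest: sphere_W_SucD succs_in_sphere_W)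
  finally show ?thesis .
qed

lemma nn_pairs_Suc:
  "nn_pairs k (Suc m) = nn_pairs k m \<union> (\<lambda>y. (butlast y, y)) ` sphere_W k (Suc m)"
proof (intro equalityI subsetI)
  fix p assume "p \<in> nn_pairs k (Suc m)"
  then obtain x y where p: "p = (x, y)" and x: "x \<in> ball_V k (Suc m)" and y: "y \<in> ball_V k (Suc m)"
    and xy: "y \<in> succs k x" by (auto simp: nn_pairs_def)
  show "p \<in> nn_pairs k m \<union> (\<lambda>y. (butlast y, y)) ` sphere_W k (Suc m)"
  proof (cases "length y \<le> m")
    case True
    then show ?thesis using x y xy p by (auto simp: nn_pairs_def ball_V_def succs_def)
  next
    case False
    then have "y \<in> sphere_W k (Suc m)" using y by (auto simp: ball_V_def sphere_W_def)
    moreover have "x = butlast y" using xy by (auto simp: succs_def)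
    ultimately show ?thesis using p by auto
  qed
next
  fix p assume "p \<in> nn_pairs k m \<union> (\<lambda>y. (butlast y, y)) ` sphere_W k (Suc m)"
  then show "p \<in> nn_pairs k (Suc m)"
  proof
    assume "p \<in> nn_pairs k m"
    then show ?thesis by (auto simp: nn_pairs_def ball_V_def)
  next
    assume "p \<in> (\<lambda>y. (butlast y, y)) ` sphere_W k (Suc m)"
    then obtain y where y: "y \<in> sphere_W k (Suc m)" and p: "p = (butlast y, y)" by auto
    then show ?thesis
      using sphere_W_SucD[OF y] butlast_sphere_W_Suc_in_ball_V[OF y]
      unfolding nn_pairs_def ball_V_Suc by auto
  qed
qed

lemma pnnn_pairs_Suc:
  assumes "m \<ge> 1"
  shows "pnnn_pairs k (Suc m) = pnnn_pairs k m \<union> (\<lambda>y. (butlast (butlast y), y)) ` sphere_W k (Suc m)"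
proof (intro equalityI subsetI)
  fix p assume "p \<in> pnnn_pairs k (Suc m)"
  then obtain x z y where p: "p = (x, z)" and x: "x \<in> ball_V k (Suc m)" and z: "z \<in> ball_V k (Suc m)"
    and xy: "y \<in> succs k x" and yz: "z \<in> succs k y" by (auto simp: pnnn_pairs_def)
  show "p \<in> pnnn_pairs k m \<union> (\<lambda>y. (butlast (butlast y), y)) ` sphere_W k (Suc m)"
  proof (cases "length z \<le> m")
    case True
    then show ?thesis using x z xy yz p by (auto simp: pnnn_pairs_def ball_V_def succs_def)
  next
    case False
    then have "z \<in> sphere_W k (Suc m)" using z by (auto simp: ball_V_def sphere_W_def)
    moreover have "x = butlast (butlast z)" using xy yz by (auto simp: succs_def butlast_append)
    ultimately show ?thesis using p by auto
  qed
next
  fix p assume "p \<in> pnnn_pairs k m \<union> (\<lambda>y. (butlast (butlast y), y)) ` sphere_W k (Suc m)"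
  then show "p \<in> pnnn_pairs k (Suc m)"
  proof
    assume "p \<in> pnnn_pairs k m"
    then show ?thesis by (auto simp: pnnn_pairs_def ball_V_def)
  next
    assume "p \<in> (\<lambda>y. (butlast (butlast y), y)) ` sphere_W k (Suc m)"
    then obtain y where y: "y \<in> sphere_W k (Suc m)" and p: "p = (butlast (butlast y), y)" by auto
    obtain m' where m: "m = Suc m'" using assms by (cases m) auto
    have y1: "butlast y \<in> sphere_W k (Suc m')" "y \<in> succs k (butlast y)"
      using sphere_W_SucD[OF y] m by auto
    have y2: "butlast (butlast y) \<in> sphere_W k m'" "butlast y \<in> succs k (butlast (butlast y))"
      using sphere_W_SucD[OF y1(1)] by auto
    have "butlast (butlast y) \<in> ball_V k (Suc m)" "y \<in> ball_V k (Suc m)"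
      using y2 y m by (auto simp: ball_V_def sphere_W_def)
    then show ?thesis unfolding p pnnn_pairs_def using y1 y2 by auto
  qed
qed

lemma configs_on_values: "\<sigma> \<in> configs_on A \<Longrightarrow> x \<in> A \<Longrightarrow> \<sigma> x \<in> {-1, 1}"
  by (auto simp: configs_on_def PiE_iff)

lemma join_conf_ball_V: "x \<in> ball_V k m \<Longrightarrow> join_conf k (Suc m) \<sigma> \<omega> x = \<sigma> x"
  by (simp add: join_conf_def)

lemma join_conf_sphere_W: "y \<in> sphere_W k (Suc m) \<Longrightarrow> join_conf k (Suc m) \<sigma> \<omega> y = \<omega> y"
  by (simp add: join_conf_def sphere_W_Suc_disjoint_ball_V)

lemma sum_configs_on_ball_V_Suc:
  "(\<Sum>\<tau>\<in>configs_on (ball_V k (Suc m)). G \<tau>) =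
   (\<Sum>\<sigma>\<in>configs_on (ball_V k m). \<Sum>\<omega>\<in>configs_on (sphere_W k (Suc m)). G (join_conf k (Suc m) \<sigma> \<omega>))"
proof -
  let ?B = "ball_V k m" and ?W = "sphere_W k (Suc m)"
  have "(\<Sum>\<sigma>\<in>configs_on ?B. \<Sum>\<omega>\<in>configs_on ?W. G (join_conf k (Suc m) \<sigma> \<omega>))
     = (\<Sum>(\<sigma>, \<omega>)\<in>configs_on ?B \<times> configs_on ?W. G (join_conf k (Suc m) \<sigma> \<omega>))"
    by (rule sum.cartesian_product)
  also have "\<dots> = (\<Sum>\<tau>\<in>configs_on (ball_V k (Suc m)). G \<tau>)"
  proof (rule sum.reindex_bij_witness[where j="\<lambda>(\<sigma>, \<omega>). join_conf k (Suc m) \<sigma> \<omega>"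
        and i="\<lambda>\<tau>. (restrict \<tau> ?B, restrict \<tau> ?W)"])
    fix p assume "p \<in> configs_on ?B \<times> configs_on ?W"
    then obtain \<sigma> \<omega> where p: "p = (\<sigma>, \<omega>)" and \<sigma>: "\<sigma> \<in> configs_on ?B" and \<omega>: "\<omega> \<in> configs_on ?W"
      by auto
    show "(\<lambda>\<tau>. (restrict \<tau> ?B, restrict \<tau> ?W)) ((\<lambda>(\<sigma>, \<omega>). join_conf k (Suc m) \<sigma> \<omega>) p) = p"
      using \<sigma> \<omega> sphere_W_Suc_disjoint_ball_V unfolding p
      by (auto simp: configs_on_def join_conf_def fun_eq_iff PiE_iff extensional_def)
    show "(\<lambda>(\<sigma>, \<omega>). join_conf k (Suc m) \<sigma> \<omega>) p \<in> configs_on (ball_V k (Suc m))"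
      using \<sigma> \<omega> unfolding p
      by (auto simp: configs_on_def join_conf_def PiE_iff extensional_def ball_V_Suc)
  next
    fix \<tau> assume "\<tau> \<in> configs_on (ball_V k (Suc m))"
    then show "(\<lambda>(\<sigma>, \<omega>). join_conf k (Suc m) \<sigma> \<omega>) (restrict \<tau> ?B, restrict \<tau> ?W) = \<tau>"
      and "(restrict \<tau> ?B, restrict \<tau> ?W) \<in> configs_on ?B \<times> configs_on ?W"
      by (auto simp: configs_on_def join_conf_def fun_eq_iff PiE_iff extensional_def ball_V_Suc)
  qed auto
  finally show ?thesis by simp
qed

lemma hamiltonian_join_conf:
  assumes "m \<ge> 1"
  shows "hamiltonian k J Jp (Suc m) (join_conf k (Suc m) \<sigma> \<omega>) =
     hamiltonian k J Jp m \<sigma>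
     - Jp * (\<Sum>y\<in>sphere_W k (Suc m). \<sigma> (butlast (butlast y)) * \<omega> y)
     - J * (\<Sum>y\<in>sphere_W k (Suc m). \<sigma> (butlast y) * \<omega> y)"
proof -
  let ?\<tau> = "join_conf k (Suc m) \<sigma> \<omega>" and ?W = "sphere_W k (Suc m)"
  have in_ball: "(x, y) \<in> pnnn_pairs k m \<Longrightarrow> x \<in> ball_V k m \<and> y \<in> ball_V k m"
    "(x, y) \<in> nn_pairs k m \<Longrightarrow> x \<in> ball_V k m \<and> y \<in> ball_V k m" for x y
    by (auto simp: pnnn_pairs_def nn_pairs_def)
  have pnnn: "(\<Sum>(x, y)\<in>pnnn_pairs k (Suc m). ?\<tau> x * ?\<tau> y) =
      (\<Sum>(x, y)\<in>pnnn_pairs k m. \<sigma> x * \<sigma> y) + (\<Sum>y\<in>?W. \<sigma> (butlast (butlast y)) * \<omega> y)"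
  proof -
    have "pnnn_pairs k m \<inter> (\<lambda>y. (butlast (butlast y), y)) ` ?W = {}"
      using in_ball sphere_W_Suc_disjoint_ball_V by fastforce
    then have "(\<Sum>(x, y)\<in>pnnn_pairs k (Suc m). ?\<tau> x * ?\<tau> y) =
      (\<Sum>(x, y)\<in>pnnn_pairs k m. ?\<tau> x * ?\<tau> y) + (\<Sum>(x, y)\<in>(\<lambda>y. (butlast (butlast y), y)) ` ?W. ?\<tau> x * ?\<tau> y)"
      unfolding pnnn_pairs_Suc[OF assms] by (intro sum.union_disjoint) auto
    also have "(\<Sum>(x, y)\<in>pnnn_pairs k m. ?\<tau> x * ?\<tau> y) = (\<Sum>(x, y)\<in>pnnn_pairs k m. \<sigma> x * \<sigma> y)"
      by (rule sum.cong) (auto simp: join_conf_ball_V dest!: in_ball)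
    also have "(\<Sum>(x, y)\<in>(\<lambda>y. (butlast (butlast y), y)) ` ?W. ?\<tau> x * ?\<tau> y) =
        (\<Sum>y\<in>?W. \<sigma> (butlast (butlast y)) * \<omega> y)"
      by (subst sum.reindex) (auto intro!: inj_onI sum.cong simp: join_conf_ball_V join_conf_sphere_W
          butlast_in_ball_V butlast_sphere_W_Suc_in_ball_V)
    finally show ?thesis .
  qed
  have nn: "(\<Sum>(x, y)\<in>nn_pairs k (Suc m). ?\<tau> x * ?\<tau> y) =
      (\<Sum>(x, y)\<in>nn_pairs k m. \<sigma> x * \<sigma> y) + (\<Sum>y\<in>?W. \<sigma> (butlast y) * \<omega> y)"
  proof -
    have "nn_pairs k m \<inter> (\<lambda>y. (butlast y, y)) ` ?W = {}"
      using in_ball sphere_W_Suc_disjoint_ball_V by fastforce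
    then have "(\<Sum>(x, y)\<in>nn_pairs k (Suc m). ?\<tau> x * ?\<tau> y) =
      (\<Sum>(x, y)\<in>nn_pairs k m. ?\<tau> x * ?\<tau> y) + (\<Sum>(x, y)\<in>(\<lambda>y. (butlast y, y)) ` ?W. ?\<tau> x * ?\<tau> y)"
      unfolding nn_pairs_Suc by (intro sum.union_disjoint) auto
    also have "(\<Sum>(x, y)\<in>nn_pairs k m. ?\<tau> x * ?\<tau> y) = (\<Sum>(x, y)\<in>nn_pairs k m. \<sigma> x * \<sigma> y)"
      by (rule sum.cong) (auto simp: join_conf_ball_V dest!: in_ball)
    also have "(\<Sum>(x, y)\<in>(\<lambda>y. (butlast y, y)) ` ?W. ?\<tau> x * ?\<tau> y) = (\<Sum>y\<in>?W. \<sigma> (butlast y) * \<omega> y)"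
      by (subst sum.reindex) (auto intro!: inj_onI sum.cong simp: join_conf_ball_V join_conf_sphere_W
          butlast_sphere_W_Suc_in_ball_V)
    finally show ?thesis .
  qed
  show ?thesis unfolding hamiltonian_def pnnn nn by (simp add: algebra_simps)
qed

lemma boundary_term_Suc:
  "boundary_term k h (Suc m) \<sigma> =
     (\<Sum>y\<in>sphere_W k (Suc m). \<sigma> (butlast y) * \<sigma> y * h (butlast y) y (\<sigma> (butlast y)) (\<sigma> y))"
  unfolding boundary_term_def diff_Suc_1 sum_sphere_W_succs ..

lemma boundary_term_join_conf:
  "boundary_term k h (Suc m) (join_conf k (Suc m) \<sigma> \<omega>) =
     (\<Sum>y\<in>sphere_W k (Suc m). \<sigma> (butlast y) * \<omega> y * h (butlast y) y (\<sigma> (butlast y)) (\<omega> y))"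
  unfolding boundary_term_Suc
  by (rule sum.cong) (auto simp: join_conf_ball_V join_conf_sphere_W butlast_sphere_W_Suc_in_ball_V)

text \<open>Sum over the spin \<open>t\<close> of the child \<open>y\<close> of \<open>x\<close> of the factors of the Gibbs weight involving \<open>t\<close>,
  where \<open>s\<close> is the spin of the parent of \<open>x\<close> and \<open>r\<close> that of \<open>x\<close>.\<close>

definition edge_factor :: "real \<Rightarrow> real \<Rightarrow> real \<Rightarrow> bfield \<Rightarrow> nat list \<Rightarrow> nat list \<Rightarrow> real \<Rightarrow> real \<Rightarrow> real"
  where "edge_factor \<beta> J Jp h x y s r = (\<Sum>t\<in>{-1, 1}. exp (\<beta>*Jp*s*t + \<beta>*J*r*t + r*t*h x y r t))"

lemma edge_factor_pos: "edge_factor \<beta> J Jp h x y s r > 0"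
  unfolding edge_factor_def by (rule sum_pos) auto

lemma sum_gibbs_weight_join_conf:
  assumes "m \<ge> 1"
  shows "(\<Sum>\<omega>\<in>configs_on (sphere_W k (Suc m)). gibbs_weight k \<beta> J Jp h (Suc m) (join_conf k (Suc m) \<sigma> \<omega>))
    = exp (-\<beta> * hamiltonian k J Jp m \<sigma>) *
      (\<Prod>x\<in>sphere_W k m. \<Prod>y\<in>succs k x. edge_factor \<beta> J Jp h x y (\<sigma> (butlast x)) (\<sigma> x))"
proof -
  let ?W = "sphere_W k (Suc m)"
  define g where "g y t = \<beta>*Jp*\<sigma> (butlast (butlast y))*t + \<beta>*J*\<sigma> (butlast y)*t
      + \<sigma> (butlast y)*t*h (butlast y) y (\<sigma> (butlast y)) t" for y t
  have weight: "gibbs_weight k \<beta> J Jp h (Suc m) (join_conf k (Suc m) \<sigma> \<omega>)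
      = exp (-\<beta> * hamiltonian k J Jp m \<sigma>) * (\<Prod>y\<in>?W. exp (g y (\<omega> y)))" for \<omega>
  proof -
    have "(\<Sum>y\<in>?W. g y (\<omega> y)) = \<beta>*Jp*(\<Sum>y\<in>?W. \<sigma> (butlast (butlast y)) * \<omega> y)
       + \<beta>*J*(\<Sum>y\<in>?W. \<sigma> (butlast y) * \<omega> y)
       + (\<Sum>y\<in>?W. \<sigma> (butlast y) * \<omega> y * h (butlast y) y (\<sigma> (butlast y)) (\<omega> y))"
      unfolding g_def by (simp add: sum.distrib sum_distrib_left algebra_simps)
    then have exponent: "- \<beta> * hamiltonian k J Jp (Suc m) (join_conf k (Suc m) \<sigma> \<omega>)
            + boundary_term k h (Suc m) (join_conf k (Suc m) \<sigma> \<omega>)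
         = -\<beta> * hamiltonian k J Jp m \<sigma> + (\<Sum>y\<in>?W. g y (\<omega> y))"
      unfolding hamiltonian_join_conf[OF assms] boundary_term_join_conf by (simp add: algebra_simps)
    show ?thesis unfolding gibbs_weight_def exponent exp_add exp_sum[OF finite_sphere_W] ..
  qed
  have "(\<Sum>\<omega>\<in>configs_on ?W. gibbs_weight k \<beta> J Jp h (Suc m) (join_conf k (Suc m) \<sigma> \<omega>))
     = exp (-\<beta> * hamiltonian k J Jp m \<sigma>) * (\<Sum>\<omega>\<in>configs_on ?W. \<Prod>y\<in>?W. exp (g y (\<omega> y)))"
    unfolding weight by (simp add: sum_distrib_left)
  also have "(\<Sum>\<omega>\<in>configs_on ?W. \<Prod>y\<in>?W. exp (g y (\<omega> y))) = (\<Prod>y\<in>?W. \<Sum>t\<in>{-1, 1}. exp (g y t))"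
    unfolding configs_on_def by (rule prod_sum_PiE[symmetric]) auto
  also have "\<dots> = (\<Prod>y\<in>?W. edge_factor \<beta> J Jp h (butlast y) y (\<sigma> (butlast (butlast y))) (\<sigma> (butlast y)))"
    unfolding edge_factor_def g_def ..
  also have "\<dots> = (\<Prod>x\<in>sphere_W k m. \<Prod>y\<in>succs k x. edge_factor \<beta> J Jp h x y (\<sigma> (butlast x)) (\<sigma> x))"
    by (rule prod_sphere_W_succs[symmetric])
  finally show ?thesis .
qed

lemma partition_fn_pos: "partition_fn k \<beta> J Jp h n > 0"
  unfolding partition_fn_def gibbs_weight_def
proof (rule sum_pos)
  show "finite (configs_on (ball_V k n))" unfolding configs_on_def by (simp add: finite_PiE)
  show "configs_on (ball_V k n) \<noteq> {}" unfolding configs_on_def by (simp add: PiE_eq_empty_iff)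
qed simp

lemma compatibleI:
  assumes recursion: "\<And>m x s r. m \<ge> 1 \<Longrightarrow> x \<in> sphere_W k m \<Longrightarrow> s \<in> {-1, 1} \<Longrightarrow> r \<in> {-1, 1} \<Longrightarrow>
      (\<Prod>y\<in>succs k x. edge_factor \<beta> J Jp h x y s r) = C x * exp (s * r * h (butlast x) x s r)"
  shows "compatible k \<beta> J Jp h"
  unfolding compatible_def
proof (intro allI impI ballI)
  fix n \<sigma> assume "2 \<le> n" and \<sigma>: "\<sigma> \<in> configs_on (ball_V k (n - 1))"
  then obtain m where n: "n = Suc m" and m: "m \<ge> 1" by (cases n) auto
  define K where "K = (\<Prod>x\<in>sphere_W k m. C x)"
  have "C x > 0" if "x \<in> sphere_W k m" for x
  proof -
    have "0 < (\<Prod>y\<in>succs k x. edge_factor \<beta> J Jp h x y 1 1)"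
      by (intro prod_pos) (simp add: edge_factor_pos)
    then show ?thesis using recursion[OF m that, of 1 1] by (simp add: zero_less_mult_iff)
  qed
  then have "K > 0" unfolding K_def by (rule prod_pos)
  have sum_out: "(\<Sum>\<omega>\<in>configs_on (sphere_W k (Suc m)). gibbs_weight k \<beta> J Jp h (Suc m) (join_conf k (Suc m) \<tau> \<omega>))
      = K * gibbs_weight k \<beta> J Jp h m \<tau>" if \<tau>: "\<tau> \<in> configs_on (ball_V k m)" for \<tau>
  proof -
    have "(\<Prod>x\<in>sphere_W k m. \<Prod>y\<in>succs k x. edge_factor \<beta> J Jp h x y (\<tau> (butlast x)) (\<tau> x))
        = (\<Prod>x\<in>sphere_W k m. C x * exp (\<tau> (butlast x) * \<tau> x * h (butlast x) x (\<tau> (butlast x)) (\<tau> x)))"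
    proof (rule prod.cong[OF refl])
      fix x assume x: "x \<in> sphere_W k m"
      then have "x \<in> ball_V k m" "butlast x \<in> ball_V k m"
        using sphere_W_subset_ball_V[of k m] butlast_in_ball_V by auto
      then show "(\<Prod>y\<in>succs k x. edge_factor \<beta> J Jp h x y (\<tau> (butlast x)) (\<tau> x))
          = C x * exp (\<tau> (butlast x) * \<tau> x * h (butlast x) x (\<tau> (butlast x)) (\<tau> x))"
        using recursion[OF m x] configs_on_values[OF \<tau>] by blast
    qed
    also have "\<dots> = K * exp (boundary_term k h m \<tau>)"
      using m unfolding K_def prod.distrib by (cases m) (simp_all add: boundary_term_Suc exp_sum)
    finally show ?thesis
      by (subst sum_gibbs_weight_join_conf[OF m]) (simp add: gibbs_weight_def exp_add[symmetric])
  qed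
  have "partition_fn k \<beta> J Jp h (Suc m) = K * partition_fn k \<beta> J Jp h m"
    unfolding partition_fn_def sum_configs_on_ball_V_Suc by (simp add: sum_out sum_distrib_left)
  with \<open>K > 0\<close> partition_fn_pos[of k \<beta> J Jp h m] show
    "(\<Sum>\<omega>\<in>configs_on (sphere_W k n). mu_n k \<beta> J Jp h n (join_conf k n \<sigma> \<omega>)) = mu_n k \<beta> J Jp h (n - 1) \<sigma>"
    using \<sigma> unfolding n diff_Suc_1 mu_n_def sum_divide_distrib[symmetric] by (simp add: sum_out)
qed

lemma mu_n_gauge_invariant:
  assumes gauge: "\<And>x y p q. x \<in> tree_V k \<Longrightarrow> y \<in> succs k x \<Longrightarrow> p \<in> {-1, 1} \<Longrightarrow> q \<in> {-1, 1} \<Longrightarrow>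
      p * q * h' x y p q = p * q * h x y p q - c x y"
    and "n \<ge> 1" and \<sigma>: "\<sigma> \<in> configs_on (ball_V k n)"
  shows "mu_n k \<beta> J Jp h' n \<sigma> = mu_n k \<beta> J Jp h n \<sigma>"
proof -
  define T where "T = (\<Sum>x\<in>sphere_W k (n - 1). \<Sum>y\<in>succs k x. c x y)"
  have "boundary_term k h' n \<tau> = boundary_term k h n \<tau> - T" if \<tau>: "\<tau> \<in> configs_on (ball_V k n)" for \<tau>
  proof -
    have "boundary_term k h' n \<tau> =
        (\<Sum>x\<in>sphere_W k (n - 1). \<Sum>y\<in>succs k x. \<tau> x * \<tau> y * h x y (\<tau> x) (\<tau> y) - c x y)"
      unfolding boundary_term_def
    proof (intro sum.cong refl)
      fix x y assume x: "x \<in> sphere_W k (n - 1)" and y: "y \<in> succs k x"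
      have "x \<in> ball_V k n" "y \<in> ball_V k n"
        using x succs_in_sphere_W[OF x y] \<open>n \<ge> 1\<close> by (auto simp: sphere_W_def ball_V_def)
      then show "\<tau> x * \<tau> y * h' x y (\<tau> x) (\<tau> y) = \<tau> x * \<tau> y * h x y (\<tau> x) (\<tau> y) - c x y"
        using gauge x y configs_on_values[OF \<tau>] sphere_W_subset_tree_V by blast
    qed
    then show ?thesis unfolding boundary_term_def T_def by (simp add: sum_subtractf)
  qed
  then have weight: "gibbs_weight k \<beta> J Jp h' n \<tau> = gibbs_weight k \<beta> J Jp h n \<tau> * exp (-T)"
    if "\<tau> \<in> configs_on (ball_V k n)" for \<tau>
    using that unfolding gibbs_weight_def by (simp add: exp_add[symmetric])
  then have "partition_fn k \<beta> J Jp h' n = partition_fn k \<beta> J Jp h n * exp (-T)"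
    unfolding partition_fn_def by (simp add: sum_distrib_right)
  then show ?thesis unfolding mu_n_def weight[OF \<sigma>] by simp
qed

lemma u_h_rel_gauge:
  assumes "a \<noteq> 0" and "u_h_rel k a u1 u2 u3 h" and "u_h_rel k a u1 u2 u3 h'"
    and "x \<in> tree_V k" "y \<in> succs k x" "p \<in> {-1, 1}" "q \<in> {-1, 1}"
  shows "p * q * h' x y p q = p * q * h x y p q - (h' x y (-1) 1 - h x y (-1) 1)"
proof -
  have "h' x y 1 1 + h' x y (-1) 1 = h x y 1 1 + h x y (-1) 1"
    and "h' x y (-1) (-1) + h' x y (-1) 1 = h x y (-1) (-1) + h x y (-1) 1"
    and "h' x y 1 1 + h' x y 1 (-1) = h x y 1 1 + h x y 1 (-1)"
    using assms(1-5) unfolding u_h_rel_def by auto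
  then show ?thesis using assms(6,7) by auto
qed

lemma mu_n_eq_if_u_h_rel:
  assumes "a \<noteq> 0" and "u_h_rel k a u1 u2 u3 h" and "u_h_rel k a u1 u2 u3 h'"
    and "n \<ge> 1" and "\<sigma> \<in> configs_on (ball_V k n)"
  shows "mu_n k \<beta> J Jp h n \<sigma> = mu_n k \<beta> J Jp h' n \<sigma>"
  using mu_n_gauge_invariant[OF u_h_rel_gauge[OF assms(1-3)] assms(4,5)] by simp

text \<open>The relations with \<open>u\<close> fix \<open>h\<close> only up to one free parameter per edge; this representative
  takes \<open>h\<^bsub>xy,-+\<^esub> = 0\<close>.\<close>

definition canonical_bfield :: "real \<Rightarrow> (nat list \<Rightarrow> nat list \<Rightarrow> real) \<Rightarrow> (nat list \<Rightarrow> nat list \<Rightarrow> real)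
    \<Rightarrow> (nat list \<Rightarrow> nat list \<Rightarrow> real) \<Rightarrow> bfield"
  where "canonical_bfield a u1 u2 u3 x y s t =
    (if s = 1 then (if t = 1 then ln (u1 x y / a) else ln (u3 x y / u1 x y))
     else (if t = 1 then 0 else ln (u2 x y / a)))"

lemma u_h_rel_canonical_bfield:
  assumes "a > 0" and "\<forall>x \<in> tree_V k. \<forall>y \<in> succs k x. u1 x y > 0 \<and> u2 x y > 0 \<and> u3 x y > 0"
  shows "u_h_rel k a u1 u2 u3 (canonical_bfield a u1 u2 u3)"
  using assms unfolding u_h_rel_def canonical_bfield_def by (fastforce simp: exp_add)

lemma edge_factor_canonical_bfield:
  fixes a \<beta> J Jp :: real
  assumes a: "a = exp (2*\<beta>*J)" and u: "u1 x y > 0" "u2 x y > 0" "u3 x y > 0"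
  defines "P \<equiv> exp (\<beta>*J)" and "Q \<equiv> exp (\<beta>*Jp)"
  shows "edge_factor \<beta> J Jp (canonical_bfield a u1 u2 u3) x y 1 1 = Q*P*(u1 x y/a) + u1 x y/(Q*P*u3 x y)"
    and "edge_factor \<beta> J Jp (canonical_bfield a u1 u2 u3) x y (-1) 1 = P/Q*(u1 x y/a) + Q*u1 x y/(P*u3 x y)"
    and "edge_factor \<beta> J Jp (canonical_bfield a u1 u2 u3) x y 1 (-1) = Q/P + P/Q*(u2 x y/a)"
    and "edge_factor \<beta> J Jp (canonical_bfield a u1 u2 u3) x y (-1) (-1) = 1/(Q*P) + Q*P*(u2 x y/a)"
  using u a unfolding edge_factor_def canonical_bfield_def P_def Q_def
  by (simp_all add: exp_add exp_diff exp_minus field_simps)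

lemma edge_factor_ratio_identities:
  fixes P Q a b U1 U2 U3 :: real
  assumes pos: "P > 0" "Q > 0" "U1 > 0" "U2 > 0" "U3 > 0" and ab: "a = P^2" "b = Q^2"
  defines "M \<equiv> P/Q*(U1/a) + Q*U1/(P*U3)"
  shows "Q*P*(U1/a) + U1/(Q*P*U3) = M * ((b*U3 + 1)/(U3 + b))"
    and "1/(Q*P) + Q*P*(U2/a) = M * (((b*U2 + 1)*U3)/((U3 + b)*U1))"
    and "Q/P + P/Q*(U2/a) = M * ((b*U3 + 1)/(U3 + b)) / (((b*U3 + 1)*U1)/((U2 + b)*U3))"
proof -
  have "b > 0" using ab pos by simp
  define S where "S = U3 + b"
  define T where "T = b*U3 + 1"
  define R where "R = U2 + b"
  define V where "V = b*U2 + 1"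
  have SRTV: "S > 0" "T > 0" "R > 0" "V > 0"
    using \<open>b > 0\<close> pos unfolding S_def T_def R_def V_def by (auto intro: add_pos_pos)
  have M: "M = U1*S/(P*Q*U3)"
    unfolding M_def ab S_def using pos by (simp add: field_simps power2_eq_square)
  have "Q*P*(U1/a) + U1/(Q*P*U3) = U1*T/(P*Q*U3)"
    unfolding ab T_def using pos by (simp add: field_simps power2_eq_square)
  then show "Q*P*(U1/a) + U1/(Q*P*U3) = M * ((b*U3 + 1)/(U3 + b))"
    unfolding M T_def[symmetric] S_def[symmetric] using SRTV pos by (simp add: field_simps)
  have "1/(Q*P) + Q*P*(U2/a) = V/(P*Q)"
    unfolding ab V_def using pos by (simp add: field_simps power2_eq_square)
  then show "1/(Q*P) + Q*P*(U2/a) = M * (((b*U2 + 1)*U3)/((U3 + b)*U1))"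
    unfolding M V_def[symmetric] S_def[symmetric] using SRTV pos by (simp add: field_simps)
  have "Q/P + P/Q*(U2/a) = R/(P*Q)"
    unfolding ab R_def using pos by (simp add: field_simps power2_eq_square)
  then show "Q/P + P/Q*(U2/a) = M * ((b*U3 + 1)/(U3 + b)) / (((b*U3 + 1)*U1)/((U2 + b)*U3))"
    unfolding M T_def[symmetric] S_def[symmetric] R_def[symmetric] using SRTV pos
    by (simp add: field_simps)
qed

lemma canonical_bfield_recursion:
  fixes a b \<beta> J Jp :: real
  assumes a: "a = exp (2*\<beta>*J)" and b: "b = exp (2*\<beta>*Jp)"
    and u_pos: "\<And>y. y \<in> succs k x \<Longrightarrow> u1 x y > 0 \<and> u2 x y > 0 \<and> u3 x y > 0"
    and u_parent_pos: "u1 w x > 0" "u2 w x > 0" "u3 w x > 0"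
    and u_parent: "u1 w x = a * (\<Prod>z \<in> succs k x. (b * u3 x z + 1) / (u3 x z + b))"
      "u2 w x = a * (\<Prod>z \<in> succs k x. ((b * u2 x z + 1) * u3 x z) / ((u3 x z + b) * u1 x z))"
      "u3 w x = a * (\<Prod>z \<in> succs k x. ((b * u3 x z + 1) * u1 x z) / ((u2 x z + b) * u3 x z))"
    and s: "s \<in> {-1, 1}" and r: "r \<in> {-1, 1}"
  shows "(\<Prod>y\<in>succs k x. edge_factor \<beta> J Jp (canonical_bfield a u1 u2 u3) x y s r) =
     (\<Prod>y\<in>succs k x. edge_factor \<beta> J Jp (canonical_bfield a u1 u2 u3) x y (-1) 1)
       * exp (s * r * canonical_bfield a u1 u2 u3 w x s r)"
proof -
  define P where "P = exp (\<beta>*J)"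
  define Q where "Q = exp (\<beta>*Jp)"
  have PQ: "P > 0" "Q > 0" unfolding P_def Q_def by auto
  have aP: "a = P^2" unfolding a P_def by (simp add: power2_eq_square exp_add[symmetric])
  have bQ: "b = Q^2" unfolding b Q_def by (simp add: power2_eq_square exp_add[symmetric])
  have "a > 0" using a by simp
  let ?F = "edge_factor \<beta> J Jp (canonical_bfield a u1 u2 u3) x"
  let ?q1 = "\<lambda>z. (b * u3 x z + 1) / (u3 x z + b)"
  let ?q2 = "\<lambda>z. ((b * u2 x z + 1) * u3 x z) / ((u3 x z + b) * u1 x z)"
  let ?q3 = "\<lambda>z. ((b * u3 x z + 1) * u1 x z) / ((u2 x z + b) * u3 x z)"
  let ?c = "\<Prod>y\<in>succs k x. ?F y (-1) 1"
  have ratio: "?F y 1 1 = ?F y (-1) 1 * ?q1 y" "?F y (-1) (-1) = ?F y (-1) 1 * ?q2 y"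
      "?F y 1 (-1) = ?F y (-1) 1 * ?q1 y / ?q3 y" if y: "y \<in> succs k x" for y
  proof -
    have u: "u1 x y > 0" "u2 x y > 0" "u3 x y > 0" using u_pos[OF y] by auto
    note factor_values = edge_factor_canonical_bfield[where ?u1.0=u1 and ?u2.0=u2 and ?u3.0=u3 and x=x and y=y and Jp=Jp, OF a u, folded P_def Q_def]
    show "?F y 1 1 = ?F y (-1) 1 * ?q1 y" "?F y (-1) (-1) = ?F y (-1) 1 * ?q2 y"
      "?F y 1 (-1) = ?F y (-1) 1 * ?q1 y / ?q3 y"
      unfolding factor_values by (rule edge_factor_ratio_identities[OF PQ u aP bQ])+
  qed
  from s r consider "s = 1" "r = 1" | "s = -1" "r = 1" | "s = 1" "r = -1" | "s = -1" "r = -1"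
    by auto
  then show ?thesis
  proof cases
    case 1
    then have "(\<Prod>y\<in>succs k x. ?F y s r) = ?c * prod ?q1 (succs k x)"
      using ratio(1) by (simp add: prod.distrib[symmetric] cong: prod.cong)
    also have "\<dots> = ?c * (u1 w x / a)" using u_parent \<open>a > 0\<close> by simp
    finally show ?thesis using 1 u_parent_pos \<open>a > 0\<close> by (simp add: canonical_bfield_def)
  next
    case 2
    then show ?thesis by (simp add: canonical_bfield_def)
  next
    case 3
    then have "(\<Prod>y\<in>succs k x. ?F y s r) = (\<Prod>y\<in>succs k x. ?F y (-1) 1 * ?q1 y / ?q3 y)"
      using ratio(3) by (auto intro: prod.cong)
    also have "\<dots> = ?c * prod ?q1 (succs k x) / prod ?q3 (succs k x)"
      by (simp only: prod_dividef prod.distrib)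
    also have "\<dots> = ?c * (u1 w x / u3 w x)" using u_parent \<open>a > 0\<close> by simp
    finally show ?thesis using 3 u_parent_pos by (simp add: canonical_bfield_def exp_minus ln_div exp_diff)
  next
    case 4
    then have "(\<Prod>y\<in>succs k x. ?F y s r) = ?c * prod ?q2 (succs k x)"
      using ratio(2) by (simp add: prod.distrib[symmetric] cong: prod.cong)
    also have "\<dots> = ?c * (u2 w x / a)" using u_parent \<open>a > 0\<close> by simp
    finally show ?thesis using 4 u_parent_pos \<open>a > 0\<close> by (simp add: canonical_bfield_def)
  qed
qed

lemma compatible_canonical_bfield:
  fixes a b \<beta> J Jp :: real
  assumes a: "a = exp (2 * \<beta> * J)" and b: "b = exp (2 * \<beta> * Jp)"
    and pos: "\<forall>x \<in> tree_V k. \<forall>y \<in> succs k x. u1 x y > 0 \<and> u2 x y > 0 \<and> u3 x y > 0"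
    and eq: "\<forall>x \<in> tree_V k. \<forall>y \<in> succs k x.
       u1 x y = a * (\<Prod>z \<in> succs k y. (b * u3 y z + 1) / (u3 y z + b)) \<and>
       u2 x y = a * (\<Prod>z \<in> succs k y. ((b * u2 y z + 1) * u3 y z) / ((u3 y z + b) * u1 y z)) \<and>
       u3 x y = a * (\<Prod>z \<in> succs k y. ((b * u3 y z + 1) * u1 y z) / ((u2 y z + b) * u3 y z))"
  shows "compatible k \<beta> J Jp (canonical_bfield a u1 u2 u3)"
proof (rule compatibleI)
  let ?h = "canonical_bfield a u1 u2 u3"
  fix m x and s r :: real
  assume m: "m \<ge> 1" and x: "x \<in> sphere_W k m" and s: "s \<in> {-1, 1}" and r: "r \<in> {-1, 1}"
  obtain m' where "m = Suc m'" using m by (cases m) auto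
  then have parent: "butlast x \<in> tree_V k" "x \<in> succs k (butlast x)" and x_tree: "x \<in> tree_V k"
    using x sphere_W_SucD sphere_W_subset_tree_V by blast+
  show "(\<Prod>y\<in>succs k x. edge_factor \<beta> J Jp ?h x y s r) =
      (\<Prod>y\<in>succs k x. edge_factor \<beta> J Jp ?h x y (-1) 1) * exp (s * r * ?h (butlast x) x s r)"
  proof (rule canonical_bfield_recursion[OF a b _ _ _ _ _ _ _ s r])
    show "u1 x y > 0 \<and> u2 x y > 0 \<and> u3 x y > 0" if "y \<in> succs k x" for y
      using pos x_tree that by blast
  qed (use pos[rule_format, OF parent] eq[rule_format, OF parent] in \<open>simp_all only:\<close>)
qed

theorem theorem3p4:
  fixes k :: nat and \<beta> J Jp a b :: real
    and u1 u2 u3 :: "nat list \<Rightarrow> nat list \<Rightarrow> real"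
  assumes "k \<ge> 1" and "\<beta> > 0"
    and "a = exp (2 * \<beta> * J)" and "b = exp (2 * \<beta> * Jp)"
    and pos: "\<forall>x \<in> tree_V k. \<forall>y \<in> succs k x. u1 x y > 0 \<and> u2 x y > 0 \<and> u3 x y > 0"
    and eq: "\<forall>x \<in> tree_V k. \<forall>y \<in> succs k x.
       u1 x y = a * (\<Prod>z \<in> succs k y. (b * u3 y z + 1) / (u3 y z + b)) \<and>
       u2 x y = a * (\<Prod>z \<in> succs k y. ((b * u2 y z + 1) * u3 y z) / ((u3 y z + b) * u1 y z)) \<and>
       u3 x y = a * (\<Prod>z \<in> succs k y. ((b * u3 y z + 1) * u1 y z) / ((u2 y z + b) * u3 y z))"
  shows "(\<exists>h. u_h_rel k a u1 u2 u3 h \<and> compatible k \<beta> J Jp h)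
       \<and> (\<forall>h h'. u_h_rel k a u1 u2 u3 h \<and> u_h_rel k a u1 u2 u3 h' \<longrightarrow>
            (\<forall>n \<ge> 1. \<forall>\<sigma> \<in> configs_on (ball_V k n).
               mu_n k \<beta> J Jp h n \<sigma> = mu_n k \<beta> J Jp h' n \<sigma>))"
proof -
  have "a > 0" using \<open>a = exp (2 * \<beta> * J)\<close> by simp
  have "u_h_rel k a u1 u2 u3 (canonical_bfield a u1 u2 u3)"
    using u_h_rel_canonical_bfield[OF \<open>a > 0\<close> pos] .
  moreover have "compatible k \<beta> J Jp (canonical_bfield a u1 u2 u3)"
    using compatible_canonical_bfield[OF assms(3,4) pos eq] .
  moreover have "a \<noteq> 0" using \<open>a > 0\<close> by simp
  ultimately show ?thesis using mu_n_eq_if_u_h_rel by blast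
qed

end
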